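(* Let $A$ be an MV-algebra, let $\operatorname{PDer}(A)=\{d_a: a\in A\}$ where $d_a(x)=a\odot x$, and let $\operatorname{IDer}(A)$ be the set of isotone $(\odot,\vee)$-derivations $d$ on $A$ with $d(1)\in\mathbf{B}(A)$. Then both sets are closed under pointwise $\vee$ and $\wedge$, and (1) $\operatorname{PDer}(A)$ is a lattice isomorphic to the lattice $(A,\vee,\wedge)$ via $d_a\mapsto a$; (2) $\operatorname{IDer}(A)$ is a lattice isomorphic to the lattice $(\mathbf{B}(A),\vee,\wedge)$ via $d\mapsto d(1)$.
   Context: An MV-algebra is an algebra $(A,\oplus,{}^*,0)$ of type $(2,1,0)$ satisfying: $x\oplus(y\oplus z)=(x\oplus y)\oplus z$, $x\oplus y=y\oplus x$, $x\oplus 0=x$, $x^{**}=x$, $x\oplus 0^*=0^*$, $(x^*\oplus y)^*\oplus y=(y^*\oplus x)^*\oplus x$. Put $1=0^*$ and $x\odot y=(x^*\oplus y^* )^*$. The natural order is $x\le y$ iff $x^*\oplus y=1$, with lattice operations $x\vee y=(x\odot y^* )\oplus y$, $x\wedge y=x\odot(x^*\oplus y)$. The Boolean center is $\mathbf{B}(A)=\{x\in A: x\oplus x=x\}$. A $(\odot,\vee)$-derivation on $A$ is a map $d:A\to A$ with $d(x\odot y)=(d(x)\odot y)\vee(x\odot d(y))$ for all $x,y\in A$; it is isotone if $x\le y$ implies $d(x)\le d(y)$. Maps $A\to A$ are ordered and combined pointwise. *)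

theory Defs
  imports Main
begin

definition mv_algebra :: "('a \<Rightarrow> 'a \<Rightarrow> 'a) \<Rightarrow> ('a \<Rightarrow> 'a) \<Rightarrow> 'a \<Rightarrow> bool" where
  "mv_algebra pl ng z \<longleftrightarrow>
     (\<forall>x y w. pl x (pl y w) = pl (pl x y) w) \<and>
     (\<forall>x y. pl x y = pl y x) \<and>
     (\<forall>x. pl x z = x) \<and>
     (\<forall>x. ng (ng x) = x) \<and>
     (\<forall>x. pl x (ng z) = ng z) \<and>
     (\<forall>x y. pl (ng (pl (ng x) y)) y = pl (ng (pl (ng y) x)) x)"

definition mv_one :: "('a \<Rightarrow> 'a) \<Rightarrow> 'a \<Rightarrow> 'a" where
  "mv_one ng z = ng z"

definition mv_odot :: "('a \<Rightarrow> 'a \<Rightarrow> 'a) \<Rightarrow> ('a \<Rightarrow> 'a) \<Rightarrow> 'a \<Rightarrow> 'a \<Rightarrow> 'a" where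
  "mv_odot pl ng x y = ng (pl (ng x) (ng y))"

definition mv_le :: "('a \<Rightarrow> 'a \<Rightarrow> 'a) \<Rightarrow> ('a \<Rightarrow> 'a) \<Rightarrow> 'a \<Rightarrow> 'a \<Rightarrow> 'a \<Rightarrow> bool" where
  "mv_le pl ng z x y \<longleftrightarrow> pl (ng x) y = mv_one ng z"

definition mv_join :: "('a \<Rightarrow> 'a \<Rightarrow> 'a) \<Rightarrow> ('a \<Rightarrow> 'a) \<Rightarrow> 'a \<Rightarrow> 'a \<Rightarrow> 'a" where
  "mv_join pl ng x y = pl (mv_odot pl ng x (ng y)) y"

definition mv_meet :: "('a \<Rightarrow> 'a \<Rightarrow> 'a) \<Rightarrow> ('a \<Rightarrow> 'a) \<Rightarrow> 'a \<Rightarrow> 'a \<Rightarrow> 'a" where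
  "mv_meet pl ng x y = mv_odot pl ng x (pl (ng x) y)"

definition mv_boolean_center :: "('a \<Rightarrow> 'a \<Rightarrow> 'a) \<Rightarrow> 'a set" where
  "mv_boolean_center pl = {x. pl x x = x}"

definition odot_join_derivation :: "('a \<Rightarrow> 'a \<Rightarrow> 'a) \<Rightarrow> ('a \<Rightarrow> 'a) \<Rightarrow> ('a \<Rightarrow> 'a) \<Rightarrow> bool" where
  "odot_join_derivation pl ng d \<longleftrightarrow>
     (\<forall>x y. d (mv_odot pl ng x y) =
            mv_join pl ng (mv_odot pl ng (d x) y) (mv_odot pl ng x (d y)))"

definition mv_isotone :: "('a \<Rightarrow> 'a \<Rightarrow> 'a) \<Rightarrow> ('a \<Rightarrow> 'a) \<Rightarrow> 'a \<Rightarrow> ('a \<Rightarrow> 'a) \<Rightarrow> bool" where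
  "mv_isotone pl ng z d \<longleftrightarrow> (\<forall>x y. mv_le pl ng z x y \<longrightarrow> mv_le pl ng z (d x) (d y))"

definition pder :: "('a \<Rightarrow> 'a \<Rightarrow> 'a) \<Rightarrow> ('a \<Rightarrow> 'a) \<Rightarrow> 'a \<Rightarrow> ('a \<Rightarrow> 'a)" where
  "pder pl ng a = (\<lambda>x. mv_odot pl ng a x)"

definition PDer :: "('a \<Rightarrow> 'a \<Rightarrow> 'a) \<Rightarrow> ('a \<Rightarrow> 'a) \<Rightarrow> ('a \<Rightarrow> 'a) set" where
  "PDer pl ng = range (pder pl ng)"

definition IDer :: "('a \<Rightarrow> 'a \<Rightarrow> 'a) \<Rightarrow> ('a \<Rightarrow> 'a) \<Rightarrow> 'a \<Rightarrow> ('a \<Rightarrow> 'a) set" where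
  "IDer pl ng z = {d. odot_join_derivation pl ng d \<and> mv_isotone pl ng z d
                      \<and> d (mv_one ng z) \<in> mv_boolean_center pl}"

definition fun_join :: "('a \<Rightarrow> 'a \<Rightarrow> 'a) \<Rightarrow> ('a \<Rightarrow> 'a) \<Rightarrow> ('a \<Rightarrow> 'a) \<Rightarrow> ('a \<Rightarrow> 'a) \<Rightarrow> ('a \<Rightarrow> 'a)" where
  "fun_join pl ng d e = (\<lambda>x. mv_join pl ng (d x) (e x))"

definition fun_meet :: "('a \<Rightarrow> 'a \<Rightarrow> 'a) \<Rightarrow> ('a \<Rightarrow> 'a) \<Rightarrow> ('a \<Rightarrow> 'a) \<Rightarrow> ('a \<Rightarrow> 'a) \<Rightarrow> ('a \<Rightarrow> 'a)" where
  "fun_meet pl ng d e = (\<lambda>x. mv_meet pl ng (d x) (e x))"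

end

theory Submission
  imports Defs
begin

text \<open>Multiplication \<open>\<odot>\<close> distributes over \<open>\<squnion>\<close>, and by prelinearity also over \<open>\<sqinter>\<close>;
  hence \<open>a \<mapsto> d\<^sub>a\<close> is an injective lattice homomorphism from \<open>A\<close> onto \<open>PDer(A)\<close>.
  Every \<open>(\<odot>,\<squnion>)\<close>-derivation satisfies \<open>d(1) \<odot> x \<preceq> d(x) \<preceq> x\<close>. If moreover \<open>d\<close> is
  isotone then \<open>d(x) \<preceq> d(1)\<close>, and when \<open>d(1)\<close> is Boolean it acts as the identity under \<open>\<odot>\<close>
  on its down-set, so \<open>d(x) = d(1) \<odot> d(x) \<preceq> d(1) \<odot> x\<close>. Thus \<open>IDer(A)\<close> consists exactly
  of the \<open>d\<^sub>a\<close> with \<open>a\<close> Boolean, and the Boolean center is a sublattice of \<open>A\<close>.\<close>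

locale mv =
  fixes pl :: "'a \<Rightarrow> 'a \<Rightarrow> 'a" (infixl "\<oplus>" 65) and ng :: "'a \<Rightarrow> 'a" and z :: 'a ("\<zero>")
  assumes pl_assoc: "x \<oplus> (y \<oplus> w) = (x \<oplus> y) \<oplus> w"
    and pl_comm: "x \<oplus> y = y \<oplus> x"
    and pl_zero [simp]: "x \<oplus> \<zero> = x"
    and ng_ng [simp]: "ng (ng x) = x"
    and pl_one [simp]: "x \<oplus> ng \<zero> = ng \<zero>"
    and mv_axiom: "ng (ng x \<oplus> y) \<oplus> y = ng (ng y \<oplus> x) \<oplus> x"
begin

abbreviation one :: 'a ("\<one>") where "\<one> \<equiv> ng \<zero>"
abbreviation odot (infixl "\<odot>" 70) where "x \<odot> y \<equiv> mv_odot pl ng x y"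
abbreviation le (infix "\<preceq>" 50) where "x \<preceq> y \<equiv> mv_le pl ng \<zero> x y"
abbreviation join (infixl "\<squnion>" 55) where "x \<squnion> y \<equiv> mv_join pl ng x y"
abbreviation meet (infixl "\<sqinter>" 60) where "x \<sqinter> y \<equiv> mv_meet pl ng x y"

lemma pl_left_commute: "x \<oplus> (y \<oplus> w) = y \<oplus> (x \<oplus> w)"
  by (metis pl_assoc pl_comm)

lemmas pl_ac = pl_assoc[symmetric] pl_comm pl_left_commute

lemma zero_pl [simp]: "\<zero> \<oplus> x = x"
  by (metis pl_comm pl_zero)

lemma one_pl [simp]: "\<one> \<oplus> x = \<one>"
  by (metis pl_comm pl_one)

lemma ng_pl_self [simp]: "ng x \<oplus> x = \<one>"
  using mv_axiom[of x \<one>] by simp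

lemma pl_ng_self [simp]: "x \<oplus> ng x = \<one>"
  by (metis pl_comm ng_pl_self)

lemma ng_pl_self_left [simp]: "ng x \<oplus> (x \<oplus> y) = \<one>"
  by (metis pl_assoc ng_pl_self one_pl)

lemma pl_ng_self_left [simp]: "x \<oplus> (ng x \<oplus> y) = \<one>"
  by (metis pl_assoc pl_ng_self one_pl)

lemma ng_inject: "ng x = ng y \<longleftrightarrow> x = y"
  by (metis ng_ng)

lemma odot_eq: "x \<odot> y = ng (ng x \<oplus> ng y)"
  by (simp add: mv_odot_def)

lemma le_iff: "x \<preceq> y \<longleftrightarrow> ng x \<oplus> y = \<one>"
  by (simp add: mv_le_def mv_one_def)

lemma join_eq: "x \<squnion> y = ng (ng x \<oplus> y) \<oplus> y"
  by (simp add: mv_join_def odot_eq)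

lemma meet_eq: "x \<sqinter> y = x \<odot> (ng x \<oplus> y)"
  by (simp add: mv_meet_def)

lemma ng_odot: "ng (x \<odot> y) = ng x \<oplus> ng y"
  by (simp add: odot_eq)

lemma odot_commute: "x \<odot> y = y \<odot> x"
  by (simp add: odot_eq pl_comm)

lemma odot_assoc: "x \<odot> y \<odot> w = x \<odot> (y \<odot> w)"
  by (simp add: odot_eq pl_ac)

lemma odot_left_commute: "x \<odot> (y \<odot> w) = y \<odot> (x \<odot> w)"
  by (simp add: odot_eq pl_ac)

lemma odot_one [simp]: "x \<odot> \<one> = x" "\<one> \<odot> x = x"
  by (simp_all add: odot_eq)

lemma odot_zero [simp]: "x \<odot> \<zero> = \<zero>" "\<zero> \<odot> x = \<zero>"
  by (simp_all add: odot_eq)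

lemma odot_ng_self [simp]: "x \<odot> ng x = \<zero>" "ng x \<odot> x = \<zero>"
  by (simp_all add: odot_eq pl_comm)

subsection \<open>The natural order\<close>

lemma le_iff_odot_ng: "x \<preceq> y \<longleftrightarrow> x \<odot> ng y = \<zero>"
  by (simp add: le_iff odot_eq) (metis ng_ng)

lemma join_commute: "x \<squnion> y = y \<squnion> x"
  by (simp add: join_eq mv_axiom)

lemma join_absorb2: "x \<preceq> y \<Longrightarrow> x \<squnion> y = y"
  by (simp add: le_iff join_eq)

lemma le_antisym: "x \<preceq> y \<Longrightarrow> y \<preceq> x \<Longrightarrow> x = y"
  by (metis join_commute join_absorb2)

lemma le_refl [simp]: "x \<preceq> x"
  by (simp add: le_iff)

lemma zero_le [simp]: "\<zero> \<preceq> x"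
  by (simp add: le_iff)

lemma le_one [simp]: "x \<preceq> \<one>"
  by (simp add: le_iff)

lemma le_pl: "y \<preceq> x \<oplus> y"
  by (simp add: le_iff pl_left_commute)

lemma le_join2: "y \<preceq> x \<squnion> y"
  by (simp add: join_eq le_pl)

lemma le_join1: "x \<preceq> x \<squnion> y"
  by (metis join_commute le_join2)

lemma le_imp_eq_pl_diff: "x \<preceq> y \<Longrightarrow> y = x \<oplus> y \<odot> ng x"
  by (metis join_commute join_absorb2 join_eq odot_eq ng_ng pl_comm)

lemma le_ng_iff: "ng y \<preceq> ng x \<longleftrightarrow> x \<preceq> y"
  by (simp add: le_iff pl_comm)

lemma pl_mono:
  assumes "x \<preceq> y"
  shows "x \<oplus> c \<preceq> y \<oplus> c"
proof -
  have "y \<oplus> c = (x \<oplus> c) \<oplus> y \<odot> ng x"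
    using le_imp_eq_pl_diff[OF assms] by (metis pl_ac)
  then show ?thesis
    by (simp add: le_iff)
qed

lemma odot_mono: "x \<preceq> y \<Longrightarrow> c \<odot> x \<preceq> c \<odot> y"
  by (metis le_ng_iff pl_mono pl_comm ng_odot)

lemma odot_mono1: "x \<preceq> y \<Longrightarrow> x \<odot> c \<preceq> y \<odot> c"
  by (metis odot_mono odot_commute)

lemma odot_le1: "x \<odot> y \<preceq> x"
  by (simp add: le_iff odot_eq pl_ac)

lemma odot_le2: "x \<odot> y \<preceq> y"
  by (metis odot_le1 odot_commute)

lemma odot_le_iff_le_pl: "u \<odot> v \<preceq> w \<longleftrightarrow> v \<preceq> ng u \<oplus> w"
  by (simp add: le_iff odot_eq pl_ac)

lemma join_least:
  assumes "u \<preceq> w" and "v \<preceq> w"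
  shows "u \<squnion> v \<preceq> w"
proof -
  define t where "t = w \<odot> ng v"
  have w: "w = v \<oplus> t"
    using le_imp_eq_pl_diff[OF \<open>v \<preceq> w\<close>] t_def by simp
  have "ng (u \<squnion> v) \<oplus> v = (ng u \<oplus> v) \<squnion> v"
    by (simp add: join_eq odot_eq)
  also have "\<dots> = ng u \<oplus> v"
    by (metis join_commute join_absorb2 le_pl)
  finally have "ng (u \<squnion> v) \<oplus> w = ng u \<oplus> w"
    using w by (metis pl_assoc)
  with \<open>u \<preceq> w\<close> show ?thesis
    by (simp add: le_iff)
qed

lemma meet_eq_ng_join: "x \<sqinter> y = ng (ng x \<squnion> ng y)"
proof -
  have "x \<sqinter> y = ng (ng y \<squnion> ng x)"
    by (simp add: meet_eq odot_eq join_eq pl_ac)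
  then show ?thesis
    by (simp add: join_commute)
qed

lemma join_eq_ng_meet: "x \<squnion> y = ng (ng x \<sqinter> ng y)"
  by (simp add: meet_eq_ng_join)

lemma meet_commute: "x \<sqinter> y = y \<sqinter> x"
  by (metis meet_eq_ng_join join_commute)

lemma meet_absorb1: "x \<preceq> y \<Longrightarrow> x \<sqinter> y = x"
  by (simp add: meet_eq odot_eq le_iff)

lemma meet_le1: "x \<sqinter> y \<preceq> x"
  by (metis meet_eq_ng_join le_ng_iff ng_ng le_join1)

lemma meet_le2: "x \<sqinter> y \<preceq> y"
  by (metis meet_commute meet_le1)

lemma meet_greatest: "w \<preceq> u \<Longrightarrow> w \<preceq> v \<Longrightarrow> w \<preceq> u \<sqinter> v"
  by (metis meet_eq_ng_join le_ng_iff ng_ng join_least)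

subsection \<open>Distributivity of \<open>\<odot>\<close> over the lattice operations\<close>

lemma odot_join_distrib: "(a \<squnion> b) \<odot> x = a \<odot> x \<squnion> b \<odot> x"
proof (rule le_antisym)
  have "a \<preceq> ng x \<oplus> (a \<odot> x \<squnion> b \<odot> x)"
    unfolding odot_le_iff_le_pl[symmetric] odot_commute[of x a] by (rule le_join1)
  moreover have "b \<preceq> ng x \<oplus> (a \<odot> x \<squnion> b \<odot> x)"
    unfolding odot_le_iff_le_pl[symmetric] odot_commute[of x b] by (rule le_join2)
  ultimately have "a \<squnion> b \<preceq> ng x \<oplus> (a \<odot> x \<squnion> b \<odot> x)"
    by (rule join_least)
  then show "(a \<squnion> b) \<odot> x \<preceq> a \<odot> x \<squnion> b \<odot> x"
    by (metis odot_le_iff_le_pl odot_commute)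
  show "a \<odot> x \<squnion> b \<odot> x \<preceq> (a \<squnion> b) \<odot> x"
    by (intro join_least odot_mono1 le_join1 le_join2)
qed

lemma ng_pl_meet: "ng x \<oplus> (x \<sqinter> y) = ng x \<oplus> y"
proof -
  have "ng x \<oplus> (x \<sqinter> y) = ng x \<squnion> (ng x \<oplus> y)"
    using mv_axiom[of "ng x \<oplus> y" "ng x"] by (simp add: meet_eq odot_eq join_eq pl_comm)
  also have "\<dots> = ng x \<oplus> y"
    by (simp add: join_absorb2 le_iff)
  finally show ?thesis .
qed

lemma odot_ng_pl_meet: "y \<odot> ng x \<oplus> (y \<sqinter> x) = y"
proof -
  have "y \<odot> ng x \<oplus> (y \<sqinter> x) = y \<squnion> y \<odot> ng x"
    by (simp add: meet_eq ng_odot join_eq odot_eq pl_comm)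
  also have "\<dots> = y"
    by (metis join_commute join_absorb2 odot_le1)
  finally show ?thesis .
qed

lemma prelinearity: "(ng x \<oplus> y) \<squnion> (ng y \<oplus> x) = \<one>"
proof -
  have "ng (x \<odot> ng y) \<oplus> y \<odot> ng x = ng x \<oplus> ((y \<sqinter> x) \<oplus> y \<odot> ng x)"
    by (metis ng_odot ng_ng ng_pl_meet meet_commute pl_assoc)
  also have "\<dots> = ng x \<oplus> y"
    using odot_ng_pl_meet[of y x] by (simp add: pl_comm)
  also have "\<dots> = ng (x \<odot> ng y)"
    by (simp add: ng_odot)
  finally have "x \<odot> ng y \<sqinter> y \<odot> ng x = \<zero>"
    by (simp add: meet_eq)
  then show ?thesis
    by (simp add: join_eq_ng_meet odot_eq)
qed

text \<open>The upper bound uses \<open>u = u \<odot> ((ng a \<oplus> b) \<squnion> (ng b \<oplus> a))\<close>, by prelinearity.\<close>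

lemma odot_meet_distrib: "(a \<sqinter> b) \<odot> x = a \<odot> x \<sqinter> b \<odot> x"
proof (rule le_antisym)
  show "(a \<sqinter> b) \<odot> x \<preceq> a \<odot> x \<sqinter> b \<odot> x"
    by (intro meet_greatest odot_mono1 meet_le1 meet_le2)
  define u where "u = a \<odot> x \<sqinter> b \<odot> x"
  have "u = ((ng a \<oplus> b) \<squnion> (ng b \<oplus> a)) \<odot> u"
    by (simp add: prelinearity)
  also have "\<dots> = (ng a \<oplus> b) \<odot> u \<squnion> (ng b \<oplus> a) \<odot> u"
    by (rule odot_join_distrib)
  finally have "u = (ng a \<oplus> b) \<odot> u \<squnion> (ng b \<oplus> a) \<odot> u" .
  moreover have "(ng a \<oplus> b) \<odot> u \<preceq> (a \<sqinter> b) \<odot> x"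
  proof -
    have "(ng a \<oplus> b) \<odot> u \<preceq> (ng a \<oplus> b) \<odot> (a \<odot> x)"
      by (rule odot_mono) (simp add: u_def meet_le1)
    also have "(ng a \<oplus> b) \<odot> (a \<odot> x) = (a \<sqinter> b) \<odot> x"
      by (simp add: meet_eq odot_commute odot_left_commute odot_assoc)
    finally show ?thesis .
  qed
  moreover have "(ng b \<oplus> a) \<odot> u \<preceq> (a \<sqinter> b) \<odot> x"
  proof -
    have "(ng b \<oplus> a) \<odot> u \<preceq> (ng b \<oplus> a) \<odot> (b \<odot> x)"
      by (rule odot_mono) (simp add: u_def meet_le2)
    also have "(ng b \<oplus> a) \<odot> (b \<odot> x) = (b \<sqinter> a) \<odot> x"
      by (simp add: meet_eq odot_commute odot_left_commute odot_assoc)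
    also have "\<dots> = (a \<sqinter> b) \<odot> x"
      by (simp add: meet_commute)
    finally show ?thesis .
  qed
  ultimately show "u \<preceq> (a \<sqinter> b) \<odot> x"
    by (metis join_least)
qed

subsection \<open>The Boolean center\<close>

lemma boolean_center_iff [simp]: "a \<in> mv_boolean_center pl \<longleftrightarrow> a \<oplus> a = a"
  by (simp add: mv_boolean_center_def)

lemma boolean_odot_idem:
  assumes "a \<oplus> a = a"
  shows "a \<odot> a = a"
proof -
  have "a \<odot> ng (a \<odot> a) = a \<sqinter> ng a"
    by (simp add: meet_eq ng_odot)
  also have "\<dots> = ng a \<sqinter> a"
    by (rule meet_commute)
  also have "\<dots> = \<zero>"
    by (simp add: meet_eq assms)
  finally have "a \<preceq> a \<odot> a"
    by (simp add: le_iff_odot_ng)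
  then show ?thesis
    using odot_le1 le_antisym by blast
qed

lemma boolean_ng:
  assumes "a \<oplus> a = a"
  shows "ng a \<oplus> ng a = ng a"
proof -
  have "ng a \<oplus> ng a = ng (a \<odot> a)"
    by (simp add: ng_odot)
  with boolean_odot_idem[OF assms] show ?thesis
    by simp
qed

lemma odot_idem_imp_boolean:
  assumes "a \<odot> a = a"
  shows "a \<oplus> a = a"
proof -
  have "ng a \<oplus> ng a = ng a"
    using assms by (simp add: ng_odot[symmetric])
  then have "ng a \<odot> ng a = ng a"
    by (rule boolean_odot_idem)
  then show ?thesis
    by (simp add: odot_eq ng_inject)
qed

lemma boolean_odot_absorb:
  assumes "a \<oplus> a = a" and "w \<preceq> a"
  shows "a \<odot> w = w"
proof -
  have w: "w = a \<odot> (ng a \<oplus> w)"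
    using meet_absorb1[OF \<open>w \<preceq> a\<close>] meet_commute[of w a] by (simp add: meet_eq)
  have "a \<odot> w = (a \<odot> a) \<odot> (ng a \<oplus> w)"
    by (subst w) (simp add: odot_assoc)
  also have "\<dots> = w"
    using w by (simp add: boolean_odot_idem[OF \<open>a \<oplus> a = a\<close>])
  finally show ?thesis .
qed

lemma boolean_odot_eq_meet:
  assumes "a \<oplus> a = a"
  shows "a \<odot> b = a \<sqinter> b"
proof (rule le_antisym)
  show "a \<odot> b \<preceq> a \<sqinter> b"
    by (intro meet_greatest odot_le1 odot_le2)
  have "a \<sqinter> b = a \<odot> (a \<sqinter> b)"
    using boolean_odot_absorb[OF assms meet_le1] by simp
  also have "\<dots> \<preceq> a \<odot> b"
    by (intro odot_mono meet_le2)
  finally show "a \<sqinter> b \<preceq> a \<odot> b" .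
qed

lemma boolean_meet:
  assumes a: "a \<oplus> a = a" and b: "b \<oplus> b = b"
  shows "(a \<sqinter> b) \<oplus> (a \<sqinter> b) = a \<sqinter> b"
proof -
  have "(a \<sqinter> b) \<odot> (a \<sqinter> b) = (a \<odot> b) \<odot> (a \<sqinter> b)"
    by (simp add: boolean_odot_eq_meet[OF a])
  also have "\<dots> = a \<odot> (b \<odot> (a \<sqinter> b))"
    by (rule odot_assoc)
  also have "\<dots> = a \<sqinter> b"
    by (simp add: boolean_odot_absorb[OF a meet_le1] boolean_odot_absorb[OF b meet_le2])
  finally show ?thesis
    by (rule odot_idem_imp_boolean)
qed

lemma boolean_join:
  assumes "a \<oplus> a = a" and "b \<oplus> b = b"
  shows "(a \<squnion> b) \<oplus> (a \<squnion> b) = a \<squnion> b"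
proof -
  have "(ng a \<sqinter> ng b) \<oplus> (ng a \<sqinter> ng b) = ng a \<sqinter> ng b"
    using assms by (intro boolean_meet boolean_ng)
  then show ?thesis
    using boolean_ng by (simp add: join_eq_ng_meet)
qed

subsection \<open>Principal and isotone derivations\<close>

lemma derivation_odot:
  "odot_join_derivation pl ng d \<Longrightarrow> d (x \<odot> y) = d x \<odot> y \<squnion> x \<odot> d y"
  by (simp add: odot_join_derivation_def)

lemma derivation_zero: "odot_join_derivation pl ng d \<Longrightarrow> d \<zero> = \<zero>"
  using derivation_odot[of d \<zero> \<zero>] by (simp add: join_eq)

lemma derivation_le: "odot_join_derivation pl ng d \<Longrightarrow> d x \<preceq> x"
proof -
  assume D: "odot_join_derivation pl ng d"
  then have "d x \<odot> ng x \<squnion> x \<odot> d (ng x) = \<zero>"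
    using derivation_odot[OF D, of x "ng x"] derivation_zero[OF D] by simp
  then have "d x \<odot> ng x = \<zero>"
    by (metis le_join1 le_antisym zero_le)
  then show ?thesis
    by (simp add: le_iff_odot_ng)
qed

lemma derivation_ge: "odot_join_derivation pl ng d \<Longrightarrow> d \<one> \<odot> x \<preceq> d x"
  using derivation_odot[of d x \<one>] by (metis odot_one(1) le_join2 odot_commute)

lemma isotone_derivation_eq_pder:
  assumes "d \<in> IDer pl ng \<zero>"
  shows "d = pder pl ng (d \<one>)"
proof
  fix x
  have D: "odot_join_derivation pl ng d" and "d \<one> \<oplus> d \<one> = d \<one>"
    and "mv_isotone pl ng \<zero> d"
    using assms by (simp_all add: IDer_def mv_one_def)
  moreover have "d x \<preceq> d \<one>"
    using \<open>mv_isotone pl ng \<zero> d\<close> le_one unfolding mv_isotone_def by blast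
  ultimately have "d x = d \<one> \<odot> d x"
    by (simp add: boolean_odot_absorb)
  also have "\<dots> \<preceq> d \<one> \<odot> x"
    by (intro odot_mono derivation_le D)
  finally show "d x = pder pl ng (d \<one>) x"
    using derivation_ge[OF D] by (simp add: pder_def le_antisym)
qed

lemma pder_apply_one [simp]: "pder pl ng a \<one> = a"
  by (simp add: pder_def)

lemma pder_derivation: "odot_join_derivation pl ng (pder pl ng a)"
proof -
  have "a \<odot> (x \<odot> y) = (a \<odot> x) \<odot> y \<squnion> x \<odot> (a \<odot> y)" for x y
    by (simp add: join_absorb2 odot_assoc odot_left_commute)
  then show ?thesis
    by (simp add: odot_join_derivation_def pder_def)
qed

lemma pder_isotone: "mv_isotone pl ng \<zero> (pder pl ng a)"
  by (simp add: mv_isotone_def pder_def odot_mono)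

lemma pder_in_IDer: "a \<oplus> a = a \<Longrightarrow> pder pl ng a \<in> IDer pl ng \<zero>"
  by (simp add: IDer_def pder_derivation pder_isotone mv_one_def)

lemma IDer_eq_pder_image: "IDer pl ng \<zero> = pder pl ng ` mv_boolean_center pl"
proof
  show "IDer pl ng \<zero> \<subseteq> pder pl ng ` mv_boolean_center pl"
  proof
    fix d
    assume d: "d \<in> IDer pl ng \<zero>"
    then have "d \<one> \<in> mv_boolean_center pl"
      by (simp add: IDer_def mv_one_def)
    with isotone_derivation_eq_pder[OF d] show "d \<in> pder pl ng ` mv_boolean_center pl"
      by blast
  qed
  show "pder pl ng ` mv_boolean_center pl \<subseteq> IDer pl ng \<zero>"
    using pder_in_IDer by auto
qed

lemma pder_join: "pder pl ng (a \<squnion> b) = fun_join pl ng (pder pl ng a) (pder pl ng b)"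
  by (simp add: pder_def fun_join_def odot_join_distrib)

lemma pder_meet: "pder pl ng (a \<sqinter> b) = fun_meet pl ng (pder pl ng a) (pder pl ng b)"
  by (simp add: pder_def fun_meet_def odot_meet_distrib)

lemma inj_pder: "inj (pder pl ng)"
  by (metis injI pder_apply_one)

end

lemma mv_algebra_imp_mv: "mv_algebra pl ng z \<Longrightarrow> mv pl ng z"
  unfolding mv_algebra_def by unfold_locales blast+

theorem proposition5p11:
  fixes pl :: "'a \<Rightarrow> 'a \<Rightarrow> 'a" and ng :: "'a \<Rightarrow> 'a" and z :: 'a
  assumes "mv_algebra pl ng z"
  shows
    \<comment> \<open>closure of PDer(A) and IDer(A) under pointwise join and meet\<close>
    "(\<forall>d\<in>PDer pl ng. \<forall>e\<in>PDer pl ng.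
        fun_join pl ng d e \<in> PDer pl ng \<and> fun_meet pl ng d e \<in> PDer pl ng)
   \<and> (\<forall>d\<in>IDer pl ng z. \<forall>e\<in>IDer pl ng z.
        fun_join pl ng d e \<in> IDer pl ng z \<and> fun_meet pl ng d e \<in> IDer pl ng z)
   \<comment> \<open>(1) d_a \<mapsto> a is a well-defined lattice isomorphism PDer(A) \<rightarrow> A;
       stated via its inverse a \<mapsto> d_a\<close>
   \<and> bij_betw (pder pl ng) UNIV (PDer pl ng)
   \<and> (\<forall>a b. pder pl ng (mv_join pl ng a b) = fun_join pl ng (pder pl ng a) (pder pl ng b))
   \<and> (\<forall>a b. pder pl ng (mv_meet pl ng a b) = fun_meet pl ng (pder pl ng a) (pder pl ng b))
   \<comment> \<open>(2) d \<mapsto> d(1) is a lattice isomorphism IDer(A) \<rightarrow> B(A)\<close>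
   \<and> bij_betw (\<lambda>d. d (mv_one ng z)) (IDer pl ng z) (mv_boolean_center pl)
   \<and> (\<forall>d\<in>IDer pl ng z. \<forall>e\<in>IDer pl ng z.
        fun_join pl ng d e (mv_one ng z) = mv_join pl ng (d (mv_one ng z)) (e (mv_one ng z))
      \<and> fun_meet pl ng d e (mv_one ng z) = mv_meet pl ng (d (mv_one ng z)) (e (mv_one ng z)))"
proof -
  interpret mv pl ng z
    using assms by (rule mv_algebra_imp_mv)
  have "bij_betw (\<lambda>d. d (ng z)) (IDer pl ng z) (mv_boolean_center pl)"
    unfolding IDer_eq_pder_image
    by (rule bij_betw_byWitness[where f' = "pder pl ng"]) auto
  moreover have "bij_betw (pder pl ng) UNIV (PDer pl ng)"
    by (simp add: bij_betw_def PDer_def inj_pder)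
  moreover have "fun_join pl ng d e \<in> PDer pl ng \<and> fun_meet pl ng d e \<in> PDer pl ng"
    if "d \<in> PDer pl ng" "e \<in> PDer pl ng" for d e
    using that by (auto simp: PDer_def pder_join[symmetric] pder_meet[symmetric])
  moreover have "fun_join pl ng d e \<in> IDer pl ng z \<and> fun_meet pl ng d e \<in> IDer pl ng z"
    if "d \<in> IDer pl ng z" "e \<in> IDer pl ng z" for d e
    using that boolean_join boolean_meet
    by (auto simp: IDer_eq_pder_image pder_join[symmetric] pder_meet[symmetric])
  ultimately show ?thesis
    by (simp add: mv_one_def fun_join_def fun_meet_def pder_join pder_meet)
qed

end
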